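(* Fix a standard Young tableau $T$ of shape $\lambda\vdash k$. For $n\ge 1$ let $N(n;T)$ be the number of standard Young tableaux with $n$ cells that contain $T$ as a subtableau, and let $t_n$ be the number of all standard Young tableaux with $n$ cells (of any shape). Then \[\lim_{n\to\infty}\frac{N(n;T)}{t_n}=\frac{f^{\lambda}}{k!},\] where $f^\lambda$ is the number of standard Young tableaux of shape $\lambda$.
   Context: A standard Young tableau with $n$ cells is a Ferrers diagram of some partition of $n$ filled bijectively with $1,2,\dots,n$ so that entries increase along rows and down columns. For a standard Young tableau $U$ with $n$ cells and $k\le n$, the subtableau of $U$ in the letters $1,\dots,k$ is the tableau formed by the cells of $U$ containing $1,2,\dots,k$ (with those entries); $U$ contains $T$ as a subtableau if $T$ equals the subtableau of $U$ in the letters $1,\dots,|T|$. *)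

theory Defs
  imports "HOL-Analysis.Analysis"
begin

text \<open>Cells are pairs (row, column), 0-indexed.  A tableau is a partial map
from cells to entries; its domain is its set of cells (its diagram).\<close>

type_synonym tableau = "nat \<times> nat \<Rightarrow> nat option"

definition ferrers :: "(nat \<times> nat) set \<Rightarrow> bool" where
  "ferrers D \<longleftrightarrow> finite D \<and>
     (\<forall>i j i' j'. (i, j) \<in> D \<longrightarrow> i' \<le> i \<longrightarrow> j' \<le> j \<longrightarrow> (i', j') \<in> D)"

definition is_syt :: "nat \<Rightarrow> tableau \<Rightarrow> bool" where
  "is_syt n T \<longleftrightarrow> ferrers (dom T) \<and> card (dom T) = n \<and>
     bij_betw (\<lambda>c. the (T c)) (dom T) {1..n} \<and>
     (\<forall>i j. (i, Suc j) \<in> dom T \<longrightarrow> the (T (i, j)) < the (T (i, Suc j))) \<and>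
     (\<forall>i j. (Suc i, j) \<in> dom T \<longrightarrow> the (T (i, j)) < the (T (Suc i, j)))"

definition syt_set :: "nat \<Rightarrow> tableau set" where
  "syt_set n = {T. is_syt n T}"

definition syt_shape :: "(nat \<times> nat) set \<Rightarrow> tableau set" where
  "syt_shape D = {T. is_syt (card D) T \<and> dom T = D}"

definition subtab :: "nat \<Rightarrow> tableau \<Rightarrow> tableau" where
  "subtab k U = (\<lambda>c. case U c of None \<Rightarrow> None | Some v \<Rightarrow> if v \<le> k then Some v else None)"

definition contains :: "tableau \<Rightarrow> tableau \<Rightarrow> bool" where
  "contains U T \<longleftrightarrow> card (dom T) \<le> card (dom U) \<and> subtab (card (dom T)) U = T"

definition N_count :: "nat \<Rightarrow> tableau \<Rightarrow> nat" where
  "N_count n T = card {U \<in> syt_set n. contains U T}"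

end

theory Submission
  imports Defs "HOL-Real_Asymp.Real_Asymp"
begin

text \<open>A standard tableau with n cells containing T is T followed by a chain of n - k cell
  additions in Young's lattice starting from the shape \<lambda> of T, so N(n;T) counts up-paths of
  length n - k from \<lambda>.  Young's lattice is differential (DU - UD = I); commuting down steps past
  up steps gives
    #(up-paths of length L from \<lambda>) = \<Sum>j (L choose j) t(L-j) d(j),
  where t(m) is the number of tableaux with m cells (the telephone numbers, the case \<lambda> = \<emptyset>) and
  d(j) counts down-paths of length j from \<lambda>, so that d(j) = 0 for j > k and d(k) = f^\<lambda>.
  Since t(m+1)/t(m) grows like \<surd>m, t(m+2) ~ m t(m); hence (L choose k) t(L-k)/t(L+k) tends
  to 1/k! while the terms with j < k vanish.\<close>

definition addable_cells :: "(nat \<times> nat) set \<Rightarrow> (nat \<times> nat) set" where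
  "addable_cells D = {c. c \<notin> D \<and> ferrers (insert c D)}"

definition removable_cells :: "(nat \<times> nat) set \<Rightarrow> (nat \<times> nat) set" where
  "removable_cells D = {c. c \<in> D \<and> ferrers (D - {c})}"

definition row_len :: "(nat \<times> nat) set \<Rightarrow> nat \<Rightarrow> nat" where
  "row_len D i = card {j. (i, j) \<in> D}"

lemma ferrers_finite: "ferrers D \<Longrightarrow> finite D"
  unfolding ferrers_def by blast

lemma ferrers_downward_closed:
  "ferrers D \<Longrightarrow> (i, j) \<in> D \<Longrightarrow> i' \<le> i \<Longrightarrow> j' \<le> j \<Longrightarrow> (i', j') \<in> D"
  unfolding ferrers_def by blast

lemma ferrersI:
  "(\<And>i j i' j'. (i, j) \<in> D \<Longrightarrow> i' \<le> i \<Longrightarrow> j' \<le> j \<Longrightarrow> (i', j') \<in> D) \<Longrightarrow> finite D \<Longrightarrow> ferrers D"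
  unfolding ferrers_def by blast

lemma ferrers_Int: "ferrers A \<Longrightarrow> ferrers B \<Longrightarrow> ferrers (A \<inter> B)"
  unfolding ferrers_def by blast

lemma ferrers_Un: "ferrers A \<Longrightarrow> ferrers B \<Longrightarrow> ferrers (A \<union> B)"
  unfolding ferrers_def by blast

lemma ferrers_empty: "ferrers {}"
  unfolding ferrers_def by simp

lemma removable_cells_iff:
  assumes D: "ferrers D"
  shows "(i, j) \<in> removable_cells D \<longleftrightarrow> (i, j) \<in> D \<and> (i, Suc j) \<notin> D \<and> (Suc i, j) \<notin> D"
proof
  assume "(i, j) \<in> removable_cells D"
  then have "(i, j) \<in> D" and "ferrers (D - {(i, j)})"
    unfolding removable_cells_def by auto
  then show "(i, j) \<in> D \<and> (i, Suc j) \<notin> D \<and> (Suc i, j) \<notin> D"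
    using ferrers_downward_closed[of "D - {(i, j)}" i "Suc j" i j]
      ferrers_downward_closed[of "D - {(i, j)}" "Suc i" j i j] by auto
next
  assume corner: "(i, j) \<in> D \<and> (i, Suc j) \<notin> D \<and> (Suc i, j) \<notin> D"
  have "(a', b') \<in> D - {(i, j)}" if ab: "(a, b) \<in> D - {(i, j)}" "a' \<le> a" "b' \<le> b" for a b a' b'
  proof -
    have "(a', b') \<noteq> (i, j)"
    proof
      assume "(a', b') = (i, j)"
      with ab have "Suc i \<le> a \<and> j \<le> b \<or> i \<le> a \<and> Suc j \<le> b" by auto
      with ab(1) corner show False
        using ferrers_downward_closed[OF D, of a b "Suc i" j]
          ferrers_downward_closed[OF D, of a b i "Suc j"] by auto
    qed
    with ab show ?thesis using ferrers_downward_closed[OF D, of a b a' b'] by auto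
  qed
  then have "ferrers (D - {(i, j)})"
    by (rule ferrersI) (use ferrers_finite[OF D] in auto)
  with corner show "(i, j) \<in> removable_cells D"
    unfolding removable_cells_def by simp
qed

lemma addable_cells_iff:
  assumes D: "ferrers D"
  shows "(i, j) \<in> addable_cells D \<longleftrightarrow>
    (i, j) \<notin> D \<and> (0 < i \<longrightarrow> (i - 1, j) \<in> D) \<and> (0 < j \<longrightarrow> (i, j - 1) \<in> D)"
proof
  assume "(i, j) \<in> addable_cells D"
  then have "(i, j) \<notin> D" and "ferrers (insert (i, j) D)"
    unfolding addable_cells_def by auto
  then show "(i, j) \<notin> D \<and> (0 < i \<longrightarrow> (i - 1, j) \<in> D) \<and> (0 < j \<longrightarrow> (i, j - 1) \<in> D)"
    using ferrers_downward_closed[of "insert (i, j) D" i j "i - 1" j]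
      ferrers_downward_closed[of "insert (i, j) D" i j i "j - 1"] by auto
next
  assume corner: "(i, j) \<notin> D \<and> (0 < i \<longrightarrow> (i - 1, j) \<in> D) \<and> (0 < j \<longrightarrow> (i, j - 1) \<in> D)"
  have "(a', b') \<in> insert (i, j) D" if "(a, b) \<in> insert (i, j) D" "a' \<le> a" "b' \<le> b" for a b a' b'
  proof (cases "(a, b) \<in> D")
    case True
    then show ?thesis using that ferrers_downward_closed[OF D] by blast
  next
    case False
    with that have "a = i" "b = j" by auto
    with that have "(a', b') = (i, j) \<or> a' \<le> i - 1 \<and> 0 < i \<and> b' \<le> j \<or> a' \<le> i \<and> b' \<le> j - 1 \<and> 0 < j"
      by auto
    with corner show ?thesis
      using ferrers_downward_closed[OF D, of "i - 1" j a' b']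
        ferrers_downward_closed[OF D, of i "j - 1" a' b'] by auto
  qed
  then have "ferrers (insert (i, j) D)"
    by (rule ferrersI) (use ferrers_finite[OF D] in auto)
  with corner show "(i, j) \<in> addable_cells D"
    unfolding addable_cells_def by simp
qed

lemma mem_iff_less_row_len:
  assumes D: "ferrers D"
  shows "(i, j) \<in> D \<longleftrightarrow> j < row_len D i"
proof -
  let ?row = "{j. (i, j) \<in> D}"
  have "?row \<subseteq> snd ` D" by force
  then have fin: "finite ?row"
    using ferrers_finite[OF D] finite_subset by blast
  show ?thesis
  proof
    assume "(i, j) \<in> D"
    then have "{..j} \<subseteq> ?row" using ferrers_downward_closed[OF D] by blast
    then have "card {..j} \<le> card ?row" by (rule card_mono[OF fin])
    then show "j < row_len D i" unfolding row_len_def by simp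
  next
    assume less: "j < row_len D i"
    show "(i, j) \<in> D"
    proof (rule ccontr)
      assume "(i, j) \<notin> D"
      then have "?row \<subseteq> {..<j}"
        using ferrers_downward_closed[OF D, of i _ i j] by (force simp: not_less)
      then have "card ?row \<le> card {..<j}" by (rule card_mono[rotated]) simp
      with less show False unfolding row_len_def by simp
    qed
  qed
qed

lemma addable_cells_iff_row_len:
  assumes D: "ferrers D"
  shows "(i, j) \<in> addable_cells D \<longleftrightarrow> j = row_len D i \<and> (0 < i \<longrightarrow> row_len D i < row_len D (i - 1))"
  unfolding addable_cells_iff[OF D] mem_iff_less_row_len[OF D] by auto

lemma removable_cells_iff_row_len:
  assumes D: "ferrers D"
  shows "(i, j) \<in> removable_cells D \<longleftrightarrow> Suc j = row_len D i \<and> row_len D (Suc i) < row_len D i"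
  unfolding removable_cells_iff[OF D] mem_iff_less_row_len[OF D] by auto

definition corner_rows :: "(nat \<times> nat) set \<Rightarrow> nat set" where
  "corner_rows D = {i. row_len D (Suc i) < row_len D i}"

lemma finite_corner_rows:
  assumes D: "ferrers D"
  shows "finite (corner_rows D)"
proof -
  have "(i, 0) \<in> D" if "i \<in> corner_rows D" for i
    using that mem_iff_less_row_len[OF D, of i 0] unfolding corner_rows_def by simp
  then have "corner_rows D \<subseteq> fst ` D" by force
  then show ?thesis using finite_subset ferrers_finite[OF D] by blast
qed

lemma addable_cells_eq:
  assumes D: "ferrers D"
  shows "addable_cells D = (\<lambda>i. (i, row_len D i)) ` insert 0 (Suc ` corner_rows D)"
proof (rule set_eqI)
  fix c :: "nat \<times> nat"
  obtain i j where c: "c = (i, j)" by fastforce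
  have "0 < i \<and> row_len D i < row_len D (i - 1) \<longleftrightarrow> i \<in> Suc ` corner_rows D"
    unfolding corner_rows_def by (cases i) auto
  then show "c \<in> addable_cells D \<longleftrightarrow> c \<in> (\<lambda>i. (i, row_len D i)) ` insert 0 (Suc ` corner_rows D)"
    unfolding c addable_cells_iff_row_len[OF D] by auto
qed

lemma removable_cells_eq:
  assumes D: "ferrers D"
  shows "removable_cells D = (\<lambda>i. (i, row_len D i - 1)) ` corner_rows D"
proof (rule set_eqI)
  fix c :: "nat \<times> nat"
  obtain i j where c: "c = (i, j)" by fastforce
  show "c \<in> removable_cells D \<longleftrightarrow> c \<in> (\<lambda>i. (i, row_len D i - 1)) ` corner_rows D"
    unfolding c removable_cells_iff_row_len[OF D] corner_rows_def by auto
qed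

lemma finite_addable_cells: "ferrers D \<Longrightarrow> finite (addable_cells D)"
  by (simp add: addable_cells_eq finite_corner_rows)

lemma finite_removable_cells: "ferrers D \<Longrightarrow> finite (removable_cells D)"
  by (simp add: removable_cells_eq finite_corner_rows)

lemma card_addable_cells:
  assumes D: "ferrers D"
  shows "card (addable_cells D) = Suc (card (removable_cells D))"
proof -
  have "card (addable_cells D) = card (insert 0 (Suc ` corner_rows D))"
    unfolding addable_cells_eq[OF D] by (rule card_image) (simp add: inj_on_def)
  also have "\<dots> = Suc (card (corner_rows D))"
    using finite_corner_rows[OF D] by (simp add: card_image)
  also have "card (corner_rows D) = card (removable_cells D)"
    unfolding removable_cells_eq[OF D] by (rule card_image[symmetric]) (simp add: inj_on_def)
  finally show ?thesis .
qed

lemma addable_cells_ferrers: "c \<in> addable_cells D \<Longrightarrow> ferrers (insert c D)"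
  unfolding addable_cells_def by simp

lemma removable_cells_ferrers: "c \<in> removable_cells D \<Longrightarrow> ferrers (D - {c})"
  unfolding removable_cells_def by simp

lemma addable_cells_notin: "c \<in> addable_cells D \<Longrightarrow> c \<notin> D"
  unfolding addable_cells_def by simp

lemma removable_cells_in: "c \<in> removable_cells D \<Longrightarrow> c \<in> D"
  unfolding removable_cells_def by simp

lemma removable_cells_insert: "ferrers D \<Longrightarrow> c \<in> addable_cells D \<Longrightarrow> c \<in> removable_cells (insert c D)"
  unfolding addable_cells_def removable_cells_def by simp

lemma addable_cells_remove: "ferrers D \<Longrightarrow> c \<in> removable_cells D \<Longrightarrow> c \<in> addable_cells (D - {c})"
  unfolding addable_cells_def removable_cells_def by (simp add: insert_absorb)

lemma addable_removable_swap:
  assumes D: "ferrers D" and "c \<noteq> d"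
  shows "c \<in> addable_cells D \<and> d \<in> removable_cells (insert c D) \<longleftrightarrow>
    d \<in> removable_cells D \<and> c \<in> addable_cells (D - {d})"
proof -
  have swap: "insert c D - {d} = insert c (D - {d})" using \<open>c \<noteq> d\<close> by auto
  show ?thesis
  proof
    assume "c \<in> addable_cells D \<and> d \<in> removable_cells (insert c D)"
    then have c: "c \<notin> D" "ferrers (insert c D)" and d: "d \<in> D" "ferrers (insert c (D - {d}))"
      using \<open>c \<noteq> d\<close> swap unfolding addable_cells_def removable_cells_def by auto
    have "D - {d} = insert c (D - {d}) \<inter> D" using c by auto
    then have "ferrers (D - {d})" using ferrers_Int[OF d(2) D] by simp
    with c d show "d \<in> removable_cells D \<and> c \<in> addable_cells (D - {d})"
      unfolding addable_cells_def removable_cells_def by simp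
  next
    assume "d \<in> removable_cells D \<and> c \<in> addable_cells (D - {d})"
    then have d: "d \<in> D" and c: "c \<notin> D" "ferrers (insert c (D - {d}))"
      using \<open>c \<noteq> d\<close> unfolding addable_cells_def removable_cells_def by auto
    have "insert c D = insert c (D - {d}) \<union> D" by auto
    then have "ferrers (insert c D)" using ferrers_Un[OF c(2) D] by simp
    with c d swap show "c \<in> addable_cells D \<and> d \<in> removable_cells (insert c D)"
      unfolding addable_cells_def removable_cells_def by simp
  qed
qed

lemma removable_cells_insert_eq:
  assumes D: "ferrers D" and c: "c \<in> addable_cells D"
  shows "removable_cells (insert c D) =
    insert c {d \<in> removable_cells D. c \<noteq> d \<and> c \<in> addable_cells (D - {d})}"
proof -
  have "d \<in> removable_cells (insert c D) \<longleftrightarrow>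
      d \<in> insert c {d \<in> removable_cells D. c \<noteq> d \<and> c \<in> addable_cells (D - {d})}" for d
    using addable_removable_swap[OF D, of c d] c removable_cells_insert[OF D c]
    by (cases "c = d") auto
  then show ?thesis by blast
qed

lemma addable_cells_remove_eq:
  assumes D: "ferrers D" and d: "d \<in> removable_cells D"
  shows "addable_cells (D - {d}) =
    insert d {c \<in> addable_cells D. c \<noteq> d \<and> d \<in> removable_cells (insert c D)}"
proof -
  have "c \<in> addable_cells (D - {d}) \<longleftrightarrow>
      c \<in> insert d {c \<in> addable_cells D. c \<noteq> d \<and> d \<in> removable_cells (insert c D)}" for c
    using addable_removable_swap[OF D, of c d] d addable_cells_remove[OF D d]
    by (cases "c = d") auto
  then show ?thesis by blast
qed

text \<open>Young's lattice is differential, DU = UD + I, paired here with an arbitrary weight f on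
  shapes.  The pairs with c \<noteq> d match up on both sides by addable_removable_swap; the pairs with
  c = d contribute card (addable_cells D) and card (removable_cells D) copies of f D.\<close>
lemma down_up_commutation:
  fixes f :: "(nat \<times> nat) set \<Rightarrow> nat"
  assumes D: "ferrers D"
  shows "(\<Sum>c\<in>addable_cells D. \<Sum>d\<in>removable_cells (insert c D). f (insert c D - {d})) =
    f D + (\<Sum>d\<in>removable_cells D. \<Sum>c\<in>addable_cells (D - {d}). f (insert c (D - {d})))"
proof -
  let ?A = "addable_cells D" and ?R = "removable_cells D"
  let ?Q = "\<lambda>c d. c \<noteq> d \<and> c \<in> addable_cells (D - {d})"
  let ?g = "\<lambda>c d. f (insert c (D - {d}))"
  define a where "a c = (\<Sum>d\<in>{d \<in> ?R. ?Q c d}. ?g c d)" for c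
  define b where "b d = (\<Sum>c\<in>{c \<in> ?A. ?Q c d}. ?g c d)" for d
  have up: "(\<Sum>d\<in>removable_cells (insert c D). f (insert c D - {d})) = f D + a c"
    if c: "c \<in> ?A" for c
  proof -
    have "insert c D - {c} = D" using addable_cells_notin[OF c] by auto
    moreover have "insert c D - {d} = insert c (D - {d})" if "c \<noteq> d" for d
      using that by auto
    ultimately show ?thesis
      unfolding a_def removable_cells_insert_eq[OF D c]
      using finite_removable_cells[OF D] by (simp add: sum.insert)
  qed
  have down: "(\<Sum>c\<in>addable_cells (D - {d}). ?g c d) = f D + b d" if d: "d \<in> ?R" for d
  proof -
    let ?S = "{c \<in> ?A. c \<noteq> d \<and> d \<in> removable_cells (insert c D)}"
    have "(\<Sum>c\<in>addable_cells (D - {d}). ?g c d) = ?g d d + (\<Sum>c\<in>?S. ?g c d)"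
      by (subst addable_cells_remove_eq[OF D d]) (simp add: finite_addable_cells[OF D])
    moreover have "?S = {c \<in> ?A. ?Q c d}"
      using addable_removable_swap[OF D] d by blast
    ultimately show ?thesis
      unfolding b_def using removable_cells_in[OF d] by (simp add: insert_absorb)
  qed
  have "sum a ?A = sum b ?R"
    unfolding a_def b_def
    using finite_addable_cells[OF D] finite_removable_cells[OF D] by (rule sum.swap_restrict)
  then have "(\<Sum>c\<in>?A. f D + a c) = f D + (\<Sum>d\<in>?R. f D + b d)"
    using card_addable_cells[OF D] by (simp add: sum.distrib)
  then show ?thesis
    using up down by simp
qed

fun down_paths :: "nat \<Rightarrow> (nat \<times> nat) set \<Rightarrow> nat" where
  "down_paths 0 D = 1"
| "down_paths (Suc j) D = (\<Sum>c\<in>removable_cells D. down_paths j (D - {c}))"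

fun up_paths :: "nat \<Rightarrow> (nat \<times> nat) set \<Rightarrow> nat" where
  "up_paths 0 D = 1"
| "up_paths (Suc L) D = (\<Sum>c\<in>addable_cells D. up_paths L (insert c D))"

lemma down_paths_eq_0:
  assumes "finite D" "card D < j"
  shows "down_paths j D = 0"
  using assms
proof (induction j arbitrary: D)
  case (Suc j)
  have "down_paths j (D - {c}) = 0" if "c \<in> removable_cells D" for c
    using Suc card_Diff1_less[OF Suc.prems(1) removable_cells_in[OF that]] by simp
  then show ?case by simp
qed simp

text \<open>The identity D^j U = U D^j + j D^(j-1), a consequence of DU = UD + I, paired with
  the sum of all shapes.\<close>
lemma sum_addable_down_paths:
  assumes "ferrers D"
  shows "(\<Sum>c\<in>addable_cells D. down_paths j (insert c D)) =
    down_paths j D + down_paths (Suc j) D + j * down_paths (j - 1) D"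
  using assms
proof (induction j arbitrary: D)
  case 0
  then show ?case using card_addable_cells[OF 0] by simp
next
  case (Suc j)
  have "(\<Sum>c\<in>addable_cells D. down_paths (Suc j) (insert c D)) =
      down_paths j D +
      (\<Sum>d\<in>removable_cells D. \<Sum>c\<in>addable_cells (D - {d}). down_paths j (insert c (D - {d})))"
    using down_up_commutation[OF Suc.prems] by simp
  also have "(\<Sum>d\<in>removable_cells D. \<Sum>c\<in>addable_cells (D - {d}). down_paths j (insert c (D - {d}))) =
      (\<Sum>d\<in>removable_cells D.
        down_paths j (D - {d}) + down_paths (Suc j) (D - {d}) + j * down_paths (j - 1) (D - {d}))"
    using Suc.IH[OF removable_cells_ferrers] by simp
  also have "\<dots> = down_paths (Suc j) D + down_paths (Suc (Suc j)) D + j * down_paths j D"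
    by (cases j) (simp_all add: sum.distrib sum_distrib_left sum_Suc)
  finally show ?case by simp
qed

fun telephone :: "nat \<Rightarrow> nat" where
  "telephone 0 = 1"
| "telephone (Suc 0) = 1"
| "telephone (Suc (Suc n)) = telephone (Suc n) + Suc n * telephone n"

lemma telephone_Suc: "telephone (Suc n) = telephone n + n * telephone (n - 1)"
  by (cases n) auto

definition tel_binom :: "nat \<Rightarrow> nat \<Rightarrow> nat" where
  "tel_binom L j = (L choose j) * telephone (L - j)"

lemma tel_binom_eq_0: "L < j \<Longrightarrow> tel_binom L j = 0"
  unfolding tel_binom_def by simp

lemma tel_binom_Suc:
  "tel_binom (Suc L) j =
    tel_binom L j + (if j = 0 then 0 else tel_binom L (j - 1)) + Suc j * tel_binom L (Suc j)"
proof (cases j)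
  case 0
  then show ?thesis unfolding tel_binom_def using telephone_Suc[of L] by simp
next
  case (Suc i)
  show ?thesis
  proof (cases "i < L")
    case True
    define m where "m = L - Suc i"
    have tel: "telephone (L - i) = telephone m + m * telephone (L - Suc (Suc i))"
      using True telephone_Suc[of m] by (simp add: m_def Suc_diff_Suc)
    have choose: "m * (L choose Suc i) = Suc (Suc i) * (L choose Suc (Suc i))"
      unfolding m_def by (metis binomial_absorb_comp binomial_absorption)
    show ?thesis
      unfolding tel_binom_def Suc
      using arg_cong[OF choose, of "\<lambda>x. x * telephone (L - Suc (Suc i))"]
      by (simp add: tel m_def[symmetric] algebra_simps)
  qed (simp add: tel_binom_def Suc)
qed

lemma sum_tel_binom_Suc:
  fixes w :: "nat \<Rightarrow> nat"
  shows "(\<Sum>j\<le>L. tel_binom L j * (w j + w (Suc j) + j * w (j - 1))) =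
    (\<Sum>j\<le>Suc L. tel_binom (Suc L) j * w j)"
proof -
  have shift_up: "(\<Sum>j\<le>Suc L. (if j = 0 then 0 else tel_binom L (j - 1)) * w j) =
      (\<Sum>j\<le>L. tel_binom L j * w (Suc j))"
    by (subst sum.atMost_Suc_shift) simp
  have shift_down: "(\<Sum>j\<le>Suc L. Suc j * tel_binom L (Suc j) * w j) =
      (\<Sum>j\<le>L. j * tel_binom L j * w (j - 1))"
  proof -
    have "(\<Sum>j\<le>Suc L. Suc j * tel_binom L (Suc j) * w j) =
        (\<Sum>j\<le>Suc (Suc L). j * tel_binom L j * w (j - 1))"
      by (subst (2) sum.atMost_Suc_shift) simp
    also have "\<dots> = (\<Sum>j\<le>L. j * tel_binom L j * w (j - 1))"
      by (simp add: tel_binom_eq_0)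
    finally show ?thesis .
  qed
  have "(\<Sum>j\<le>Suc L. tel_binom (Suc L) j * w j) =
      (\<Sum>j\<le>Suc L. tel_binom L j * w j) + (\<Sum>j\<le>Suc L. (if j = 0 then 0 else tel_binom L (j - 1)) * w j)
        + (\<Sum>j\<le>Suc L. Suc j * tel_binom L (Suc j) * w j)"
    unfolding tel_binom_Suc by (simp add: sum.distrib algebra_simps)
  also have "\<dots> = (\<Sum>j\<le>L. tel_binom L j * w j) + (\<Sum>j\<le>L. tel_binom L j * w (Suc j))
      + (\<Sum>j\<le>L. j * tel_binom L j * w (j - 1))"
    unfolding shift_up shift_down by (simp add: tel_binom_eq_0)
  finally show ?thesis
    by (simp add: sum.distrib algebra_simps)
qed

lemma up_paths_expansion:
  assumes "ferrers D"
  shows "up_paths L D = (\<Sum>j\<le>L. tel_binom L j * down_paths j D)"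
  using assms
proof (induction L arbitrary: D)
  case 0
  then show ?case by (simp add: tel_binom_def)
next
  case (Suc L)
  have "up_paths (Suc L) D = (\<Sum>c\<in>addable_cells D. \<Sum>j\<le>L. tel_binom L j * down_paths j (insert c D))"
    using Suc.IH[OF addable_cells_ferrers] by simp
  also have "\<dots> = (\<Sum>j\<le>L. tel_binom L j * (\<Sum>c\<in>addable_cells D. down_paths j (insert c D)))"
    by (simp add: sum.swap[of _ "addable_cells D"] sum_distrib_left)
  also have "\<dots> =
      (\<Sum>j\<le>L. tel_binom L j * (down_paths j D + down_paths (Suc j) D + j * down_paths (j - 1) D))"
    using sum_addable_down_paths[OF Suc.prems] by simp
  also have "\<dots> = (\<Sum>j\<le>Suc L. tel_binom (Suc L) j * down_paths j D)"
    by (rule sum_tel_binom_Suc)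
  finally show ?case .
qed

lemma up_paths_empty: "up_paths n {} = telephone n"
proof -
  have "up_paths n {} = (\<Sum>j\<le>n. tel_binom n j * down_paths j {})"
    by (rule up_paths_expansion[OF ferrers_empty])
  also have "\<dots> = (\<Sum>j\<in>{0}. tel_binom n j * down_paths j {})"
    by (rule sum.mono_neutral_right) (auto simp: down_paths_eq_0)
  finally show ?thesis by (simp add: tel_binom_def)
qed

lemma syt_value_range:
  assumes "is_syt n U" "U c = Some v"
  shows "1 \<le> v \<and> v \<le> n"
proof -
  have "the (U c) \<in> {1..n}"
    using assms bij_betwE[of "\<lambda>c. the (U c)" "dom U" "{1..n}"] unfolding is_syt_def by blast
  with assms(2) show ?thesis by simp
qed

lemma bij_betw_values_upd:
  assumes "c \<notin> dom T"
  shows "bij_betw (\<lambda>x. the ((T(c \<mapsto> Suc k)) x)) (insert c (dom T)) {1..Suc k} \<longleftrightarrow>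
    bij_betw (\<lambda>x. the (T x)) (dom T) {1..k}"
proof -
  have "bij_betw (\<lambda>x. the ((T(c \<mapsto> Suc k)) x)) (dom T) {1..k} \<longleftrightarrow>
      bij_betw (\<lambda>x. the (T x)) (dom T) {1..k}"
    using assms by (intro bij_betw_cong) auto
  moreover have "insert c (dom T) = dom T \<union> {c}" "{1..Suc k} = {1..k} \<union> {Suc k}"
    by auto
  ultimately show ?thesis
    using assms notIn_Un_bij_betw3[of c "dom T" "\<lambda>x. the ((T(c \<mapsto> Suc k)) x)" "{1..k}"] by simp
qed

lemma syt_upd_addable:
  assumes T: "is_syt k T" and c: "c \<in> addable_cells (dom T)"
  shows "is_syt (Suc k) (T(c \<mapsto> Suc k))"
proof -
  let ?U = "T(c \<mapsto> Suc k)"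
  have c_notin: "c \<notin> dom T" using addable_cells_notin[OF c] .
  have D: "ferrers (dom T)" and fer: "ferrers (dom ?U)"
    using T addable_cells_ferrers[OF c] unfolding is_syt_def by auto
  have less: "the (?U p) < the (?U q)"
    if "q \<in> dom ?U" "p \<in> dom T" "q \<noteq> c \<Longrightarrow> the (T p) < the (T q)" for p q
    using that c_notin syt_value_range[OF T, of p] by (cases "q = c") auto
  have below: "p \<in> dom T" if "q \<in> dom ?U" "fst p \<le> fst q" "snd p \<le> snd q" "p \<noteq> q" for p q
  proof (cases "q = c")
    case True
    with that have "p \<in> dom ?U" "p \<noteq> c"
      using ferrers_downward_closed[OF fer, of "fst q" "snd q" "fst p" "snd p"] by auto
    then show ?thesis by simp
  next
    case False
    with that show ?thesis
      using ferrers_downward_closed[OF D, of "fst q" "snd q" "fst p" "snd p"] by auto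
  qed
  have "the (?U (i, j)) < the (?U (i, Suc j))" if "(i, Suc j) \<in> dom ?U" for i j
    using that T below[OF that, of "(i, j)"] unfolding is_syt_def by (intro less) auto
  moreover have "the (?U (i, j)) < the (?U (Suc i, j))" if "(Suc i, j) \<in> dom ?U" for i j
    using that T below[OF that, of "(i, j)"] unfolding is_syt_def by (intro less) auto
  moreover have "card (dom ?U) = Suc k"
    using T c_notin ferrers_finite[OF D] unfolding is_syt_def by simp
  moreover have "bij_betw (\<lambda>x. the (?U x)) (dom ?U) {1..Suc k}"
    using T bij_betw_values_upd[OF c_notin] unfolding is_syt_def by simp
  ultimately show ?thesis
    using fer unfolding is_syt_def by blast
qed

lemma syt_max_removable:
  assumes U: "is_syt n U" and c: "U c = Some n"
  shows "c \<in> removable_cells (dom U)"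
proof -
  obtain i j where c_ij: "c = (i, j)" by fastforce
  have not_above: "q \<notin> dom U" if "q \<in> dom U \<Longrightarrow> n < the (U q)" for q
  proof
    assume "q \<in> dom U"
    then obtain v where "U q = Some v" by blast
    with that \<open>q \<in> dom U\<close> syt_value_range[OF U, of q v] show False by simp
  qed
  have "the (U c) < the (U (i, Suc j))" if "(i, Suc j) \<in> dom U"
    using U that unfolding is_syt_def c_ij by blast
  moreover have "the (U c) < the (U (Suc i, j))" if "(Suc i, j) \<in> dom U"
    using U that unfolding is_syt_def c_ij by blast
  ultimately have "(i, Suc j) \<notin> dom U" "(Suc i, j) \<notin> dom U"
    using c not_above by auto
  with U c c_ij show ?thesis
    using removable_cells_iff[of "dom U"] unfolding is_syt_def by blast
qed

lemma syt_remove_max: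
  assumes U: "is_syt (Suc k) U" and c: "U c = Some (Suc k)"
  shows "is_syt k (U(c := None)) \<and> c \<in> addable_cells (dom (U(c := None)))"
proof -
  let ?T = "U(c := None)"
  have D: "ferrers (dom U)" using U unfolding is_syt_def by blast
  have dom_T: "dom ?T = dom U - {c}" by auto
  then have fer: "ferrers (dom ?T)" and add: "c \<in> addable_cells (dom ?T)"
    using syt_max_removable[OF U c] removable_cells_ferrers addable_cells_remove[OF D] by auto
  have "the (?T (i, j)) < the (?T (i, Suc j))" if "(i, Suc j) \<in> dom ?T" for i j
  proof -
    have "(i, j) \<in> dom ?T" using ferrers_downward_closed[OF fer that] by simp
    moreover have "the (U (i, j)) < the (U (i, Suc j))"
      using U that unfolding is_syt_def by (simp add: domIff)
    ultimately show ?thesis using that by auto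
  qed
  moreover have "the (?T (i, j)) < the (?T (Suc i, j))" if "(Suc i, j) \<in> dom ?T" for i j
  proof -
    have "(i, j) \<in> dom ?T" using ferrers_downward_closed[OF fer that] by simp
    moreover have "the (U (i, j)) < the (U (Suc i, j))"
      using U that unfolding is_syt_def by (simp add: domIff)
    ultimately show ?thesis using that by auto
  qed
  moreover have "card (dom ?T) = k"
    using U dom_T c unfolding is_syt_def by (simp add: card_Diff_singleton domI)
  moreover have "bij_betw (\<lambda>x. the (?T x)) (dom ?T) {1..k}"
  proof -
    have "insert c (dom ?T) = dom U" "?T(c \<mapsto> Suc k) = U" using c by auto
    then show ?thesis
      using U bij_betw_values_upd[of c ?T k] unfolding is_syt_def by simp
  qed
  ultimately show ?thesis
    using fer add unfolding is_syt_def by blast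
qed

lemma is_syt_Suc_iff:
  "is_syt (Suc k) U \<longleftrightarrow> (\<exists>T c. is_syt k T \<and> c \<in> addable_cells (dom T) \<and> U = T(c \<mapsto> Suc k))"
proof
  assume U: "is_syt (Suc k) U"
  then have "Suc k \<in> (\<lambda>c. the (U c)) ` dom U"
    unfolding is_syt_def bij_betw_def by simp
  then obtain c where c: "U c = Some (Suc k)" by auto
  then have "U = (U(c := None))(c \<mapsto> Suc k)" by auto
  with syt_remove_max[OF U c] show "\<exists>T c. is_syt k T \<and> c \<in> addable_cells (dom T) \<and> U = T(c \<mapsto> Suc k)"
    by blast
qed (auto intro: syt_upd_addable)

lemma subtab_subtab: "a \<le> b \<Longrightarrow> subtab a (subtab b U) = subtab a U"
  unfolding subtab_def by (rule ext) (auto split: option.splits)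

lemma subtab_syt_self:
  assumes "is_syt n U"
  shows "subtab n U = U"
proof
  fix c
  show "subtab n U c = U c"
    using syt_value_range[OF assms, of c] unfolding subtab_def by (cases "U c") auto
qed

lemma subtab_upd_max:
  assumes "is_syt k T" "c \<notin> dom T"
  shows "subtab k (T(c \<mapsto> Suc k)) = T"
proof
  fix x
  show "subtab k (T(c \<mapsto> Suc k)) x = T x"
    using assms syt_value_range[OF assms(1), of x] unfolding subtab_def by (cases "T x") auto
qed

lemma syt_subtab:
  assumes "is_syt n U" "k \<le> n"
  shows "is_syt k (subtab k U)"
  using assms
proof (induction n arbitrary: U)
  case 0
  then show ?case using subtab_syt_self by simp
next
  case (Suc n)
  show ?case
  proof (cases "k = Suc n")
    case True
    then show ?thesis using Suc.prems subtab_syt_self by simp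
  next
    case False
    obtain T c where T: "is_syt n T" and c: "c \<in> addable_cells (dom T)" and U: "U = T(c \<mapsto> Suc n)"
      using Suc.prems(1) is_syt_Suc_iff by blast
    have "subtab k U = subtab k T"
      using False Suc.prems(2) subtab_subtab[of k n U]
        subtab_upd_max[OF T addable_cells_notin[OF c]]
      unfolding U by simp
    then show ?thesis using Suc.IH[OF T] False Suc.prems(2) by simp
  qed
qed

lemma is_syt_0_iff: "is_syt 0 U \<longleftrightarrow> U = Map.empty"
  using ferrers_finite[of "dom U"] ferrers_empty unfolding is_syt_def by (auto simp: bij_betw_def)

lemma finite_syt: "finite {U. is_syt n U}"
proof (induction n)
  case 0
  then show ?case by (simp add: is_syt_0_iff)
next
  case (Suc n)
  have "{U. is_syt (Suc n) U} \<subseteq>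
      (\<lambda>(T, c). T(c \<mapsto> Suc n)) ` Sigma {T. is_syt n T} (\<lambda>T. addable_cells (dom T))"
    using is_syt_Suc_iff by fastforce
  moreover have "finite (Sigma {T. is_syt n T} (\<lambda>T. addable_cells (dom T)))"
    using Suc.IH finite_addable_cells unfolding is_syt_def by (blast intro: finite_SigmaI)
  ultimately show ?case using finite_subset by blast
qed

definition syt_extensions :: "nat \<Rightarrow> nat \<Rightarrow> tableau \<Rightarrow> tableau set" where
  "syt_extensions n k T = {U. is_syt n U \<and> subtab k U = T}"

lemma finite_syt_extensions: "finite (syt_extensions n k T)"
  unfolding syt_extensions_def using finite_syt by (rule finite_subset[rotated]) blast

lemma syt_extensions_Suc:
  assumes T: "is_syt k T"
  shows "syt_extensions (Suc k + L) k T =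
    (\<Union>c\<in>addable_cells (dom T). syt_extensions (Suc k + L) (Suc k) (T(c \<mapsto> Suc k)))"
proof (intro equalityI subsetI)
  fix U assume "U \<in> syt_extensions (Suc k + L) k T"
  then have U: "is_syt (Suc k + L) U" and "subtab k U = T"
    unfolding syt_extensions_def by auto
  obtain T' c where T': "is_syt k T'" "c \<in> addable_cells (dom T')"
    and top: "subtab (Suc k) U = T'(c \<mapsto> Suc k)"
    using syt_subtab[OF U, of "Suc k"] is_syt_Suc_iff[of k] by auto
  have "T' = T"
    using \<open>subtab k U = T\<close> subtab_subtab[of k "Suc k" U]
      subtab_upd_max[OF T'(1) addable_cells_notin[OF T'(2)]] top by simp
  with U T' top
  show "U \<in> (\<Union>c\<in>addable_cells (dom T). syt_extensions (Suc k + L) (Suc k) (T(c \<mapsto> Suc k)))"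
    unfolding syt_extensions_def by blast
next
  fix U assume "U \<in> (\<Union>c\<in>addable_cells (dom T). syt_extensions (Suc k + L) (Suc k) (T(c \<mapsto> Suc k)))"
  then obtain c where c: "c \<in> addable_cells (dom T)" and U: "is_syt (Suc k + L) U"
    and top: "subtab (Suc k) U = T(c \<mapsto> Suc k)"
    unfolding syt_extensions_def by blast
  have "subtab k U = T"
    using subtab_subtab[of k "Suc k" U] top subtab_upd_max[OF T addable_cells_notin[OF c]] by simp
  with U show "U \<in> syt_extensions (Suc k + L) k T"
    unfolding syt_extensions_def by simp
qed

lemma card_syt_extensions:
  assumes "is_syt k T"
  shows "card (syt_extensions (k + L) k T) = up_paths L (dom T)"
  using assms
proof (induction L arbitrary: k T)
  case 0
  then have "syt_extensions (k + 0) k T = {T}"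
    using subtab_syt_self unfolding syt_extensions_def by auto
  then show ?case by simp
next
  case (Suc L)
  note T = Suc.prems
  let ?ext = "\<lambda>c. syt_extensions (Suc k + L) (Suc k) (T(c \<mapsto> Suc k))"
  have "?ext c \<inter> ?ext c' = {}" if "c' \<in> addable_cells (dom T)" "c \<noteq> c'" for c c'
  proof -
    have "(T(c' \<mapsto> Suc k)) c \<noteq> (T(c \<mapsto> Suc k)) c"
      using that syt_value_range[OF T, of c "Suc k"] by auto
    then have "T(c \<mapsto> Suc k) \<noteq> T(c' \<mapsto> Suc k)" by metis
    then show ?thesis unfolding syt_extensions_def by (simp add: disjoint_iff)
  qed
  moreover have "finite (addable_cells (dom T))"
    using T finite_addable_cells unfolding is_syt_def by blast
  ultimately have "card (syt_extensions (Suc k + L) k T) =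
      (\<Sum>c\<in>addable_cells (dom T). card (?ext c))"
    unfolding syt_extensions_Suc[OF T]
    by (intro card_UN_disjoint) (auto simp: finite_syt_extensions)
  also have "\<dots> = (\<Sum>c\<in>addable_cells (dom T). up_paths L (insert c (dom T)))"
  proof (rule sum.cong[OF refl])
    fix c assume "c \<in> addable_cells (dom T)"
    have "card (?ext c) = up_paths L (dom (T(c \<mapsto> Suc k)))"
      by (rule Suc.IH[OF syt_upd_addable[OF T \<open>c \<in> addable_cells (dom T)\<close>]])
    then show "card (?ext c) = up_paths L (insert c (dom T))" by simp
  qed
  finally show ?case by simp
qed

lemma syt_shape_Suc:
  assumes D: "ferrers D" and card: "card D = Suc n"
  shows "syt_shape D = (\<Union>c\<in>removable_cells D. (\<lambda>T. T(c \<mapsto> Suc n)) ` syt_shape (D - {c}))"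
proof (intro equalityI subsetI)
  fix U assume "U \<in> syt_shape D"
  then have U: "is_syt (Suc n) U" and dom_U: "dom U = D"
    using card unfolding syt_shape_def by auto
  obtain T c where T: "is_syt n T" and c: "c \<in> addable_cells (dom T)" and U_eq: "U = T(c \<mapsto> Suc n)"
    using U is_syt_Suc_iff by blast
  have dom_T: "dom T = D - {c}"
    using dom_U U_eq addable_cells_notin[OF c] by auto
  have "c \<in> removable_cells D"
    using dom_U U_eq T dom_T unfolding removable_cells_def is_syt_def by auto
  moreover have "T \<in> syt_shape (D - {c})"
    using T dom_T card \<open>c \<in> removable_cells D\<close> removable_cells_in unfolding syt_shape_def by simp
  ultimately show "U \<in> (\<Union>c\<in>removable_cells D. (\<lambda>T. T(c \<mapsto> Suc n)) ` syt_shape (D - {c}))"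
    using U_eq by blast
next
  fix U assume "U \<in> (\<Union>c\<in>removable_cells D. (\<lambda>T. T(c \<mapsto> Suc n)) ` syt_shape (D - {c}))"
  then obtain c T where c: "c \<in> removable_cells D" and T: "T \<in> syt_shape (D - {c})"
    and U_eq: "U = T(c \<mapsto> Suc n)" by blast
  have "card (D - {c}) = n" using card removable_cells_in[OF c] by simp
  then have "is_syt n T" "dom T = D - {c}" using T unfolding syt_shape_def by auto
  then have "is_syt (Suc n) U" "dom U = D"
    using syt_upd_addable addable_cells_remove[OF D c] U_eq removable_cells_in[OF c] by auto
  then show "U \<in> syt_shape D" using card unfolding syt_shape_def by simp
qed

lemma inj_on_map_upd: "inj_on (\<lambda>T. T(c \<mapsto> v)) {T. c \<notin> dom T}"
proof (rule inj_onI)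
  fix T T' assume "T \<in> {T. c \<notin> dom T}" "T' \<in> {T. c \<notin> dom T}" "T(c \<mapsto> v) = T'(c \<mapsto> v)"
  then have "(T(c \<mapsto> v))(c := None) = (T'(c \<mapsto> v))(c := None)" "c \<notin> dom T" "c \<notin> dom T'"
    by auto
  then show "T = T'" by simp
qed

lemma card_syt_shape_Suc:
  assumes D: "ferrers D" and card: "card D = Suc n"
  shows "card (syt_shape D) = (\<Sum>c\<in>removable_cells D. card (syt_shape (D - {c})))"
proof -
  let ?ext = "\<lambda>c. (\<lambda>T. T(c \<mapsto> Suc n)) ` syt_shape (D - {c})"
  have shape: "is_syt n T \<and> dom T = D - {c}"
    if "c \<in> removable_cells D" "T \<in> syt_shape (D - {c})" for c T
    using that card removable_cells_in unfolding syt_shape_def by auto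
  have "finite (syt_shape (D - {c}))" for c
    by (rule finite_subset[OF _ finite_syt[of "card (D - {c})"]]) (auto simp: syt_shape_def)
  then have "finite (?ext c)" for c by simp
  moreover have "?ext c \<inter> ?ext c' = {}"
    if c': "c' \<in> removable_cells D" and "c \<noteq> c'" for c c'
  proof -
    have "T(c \<mapsto> Suc n) \<noteq> T'(c' \<mapsto> Suc n)" if "T' \<in> syt_shape (D - {c'})" for T T'
    proof
      assume "T(c \<mapsto> Suc n) = T'(c' \<mapsto> Suc n)"
      then have "(T(c \<mapsto> Suc n)) c = (T'(c' \<mapsto> Suc n)) c" by simp
      then have "T' c = Some (Suc n)" using \<open>c \<noteq> c'\<close> by simp
      then show False using syt_value_range[of n T' c "Suc n"] shape[OF c' that] by simp
    qed
    then show ?thesis by blast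
  qed
  ultimately have "card (syt_shape D) = (\<Sum>c\<in>removable_cells D. card (?ext c))"
    unfolding syt_shape_Suc[OF assms]
    using finite_removable_cells[OF D] by (intro card_UN_disjoint) auto
  also have "\<dots> = (\<Sum>c\<in>removable_cells D. card (syt_shape (D - {c})))"
  proof (rule sum.cong[OF refl])
    fix c assume "c \<in> removable_cells D"
    then have "syt_shape (D - {c}) \<subseteq> {T. c \<notin> dom T}" using shape by blast
    then show "card (?ext c) = card (syt_shape (D - {c}))"
      by (intro card_image inj_on_subset[OF inj_on_map_upd])
  qed
  finally show ?thesis .
qed

lemma card_syt_shape:
  assumes "ferrers D"
  shows "card (syt_shape D) = down_paths (card D) D"
proof -
  have "card (syt_shape D) = down_paths n D" if "ferrers D" "card D = n" for n
    using that
  proof (induction n arbitrary: D)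
    case 0
    then have "syt_shape D = {Map.empty}"
      using ferrers_finite unfolding syt_shape_def by (auto simp: is_syt_0_iff)
    then show ?case by simp
  next
    case (Suc n)
    have "card (syt_shape (D - {c})) = down_paths n (D - {c})" if "c \<in> removable_cells D" for c
      using Suc.IH[OF removable_cells_ferrers[OF that]] Suc.prems removable_cells_in[OF that]
      by simp
    then show ?case
      using card_syt_shape_Suc[OF Suc.prems] by simp
  qed
  with assms show ?thesis by blast
qed

lemma card_syt_set: "card (syt_set n) = telephone n"
proof -
  have "subtab 0 U = Map.empty" if "is_syt n U" for U
  proof
    fix c
    show "subtab 0 U c = None"
      using syt_value_range[OF that, of c] unfolding subtab_def by (cases "U c") auto
  qed
  then have "syt_set n = syt_extensions (0 + n) 0 Map.empty"
    unfolding syt_set_def syt_extensions_def by auto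
  then show ?thesis
    using card_syt_extensions[of 0 Map.empty n] up_paths_empty by (simp add: is_syt_0_iff)
qed

lemma N_count_eq_up_paths:
  assumes "is_syt k T"
  shows "N_count (k + L) T = up_paths L (dom T)"
proof -
  have "card (dom T) = k" "\<And>U. is_syt (k + L) U \<Longrightarrow> card (dom U) = k + L"
    using assms unfolding is_syt_def by blast+
  then have "{U \<in> syt_set (k + L). contains U T} = syt_extensions (k + L) k T"
    unfolding syt_set_def contains_def syt_extensions_def by auto
  then show ?thesis
    unfolding N_count_def using card_syt_extensions[OF assms] by simp
qed

lemma N_count_expansion:
  assumes "is_syt k T"
  shows "N_count (k + L) T = (\<Sum>j\<le>k. tel_binom L j * down_paths j (dom T))"
proof -
  have D: "ferrers (dom T)" "card (dom T) = k" using assms unfolding is_syt_def by auto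
  have "N_count (k + L) T = (\<Sum>j\<le>L. tel_binom L j * down_paths j (dom T))"
    using N_count_eq_up_paths[OF assms] up_paths_expansion[OF D(1)] by simp
  also have "\<dots> = (\<Sum>j\<le>k + L. tel_binom L j * down_paths j (dom T))"
    by (rule sum.mono_neutral_left) (auto simp: tel_binom_eq_0)
  also have "\<dots> = (\<Sum>j\<le>k. tel_binom L j * down_paths j (dom T))"
    using down_paths_eq_0[OF ferrers_finite[OF D(1)]] D(2)
    by (intro sum.mono_neutral_right) auto
  finally show ?thesis .
qed

lemma telephone_pos: "0 < telephone n"
  by (induction n rule: telephone.induct) auto

lemma telephone_mono: "mono telephone"
  unfolding mono_iff_le_Suc by (simp add: telephone_Suc)

definition tel_ratio :: "nat \<Rightarrow> real" where
  "tel_ratio n = real (telephone (Suc n)) / real (telephone n)"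

lemma tel_ratio_pos: "0 < tel_ratio n"
  unfolding tel_ratio_def by (simp add: telephone_pos)

lemma tel_ratio_Suc: "tel_ratio (Suc n) = 1 + (real n + 1) / tel_ratio n"
  using telephone_pos[of n] telephone_pos[of "Suc n"]
  unfolding tel_ratio_def by (simp add: field_simps)

text \<open>Since tel_ratio (n + 1) = 1 + (n + 1) / tel_ratio n decreases in tel_ratio n, the lower
  bound at n + 1 needs the upper bound at n and vice versa, so both are carried together.\<close>
lemma tel_ratio_bounds:
  "1 \<le> tel_ratio n \<and> real n + 1 \<le> (tel_ratio n)\<^sup>2 \<and> (tel_ratio n - 1)\<^sup>2 \<le> real n"
proof (induction n)
  case 0
  then show ?case by (simp add: tel_ratio_def)
next
  case (Suc n)
  define s where "s = tel_ratio n"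
  define m where "m = real n"
  have s: "1 \<le> s" "m + 1 \<le> s\<^sup>2" "(s - 1)\<^sup>2 \<le> m" and "0 \<le> m"
    using Suc.IH unfolding s_def m_def by auto
  have r: "tel_ratio (Suc n) = (s + m + 1) / s"
    using tel_ratio_Suc[of n] s(1) unfolding s_def m_def by (simp add: field_simps)
  have "(m + 2) * s\<^sup>2 \<le> (s + m + 1)\<^sup>2"
  proof -
    have "(s + m + 1)\<^sup>2 - (m + 2) * s\<^sup>2 = (m + 1) * (m + 2 - (s - 1)\<^sup>2)"
      by (simp add: power2_eq_square algebra_simps)
    also have "\<dots> \<ge> 0" using s(3) \<open>0 \<le> m\<close> by simp
    finally show ?thesis by simp
  qed
  then have lower: "m + 2 \<le> ((s + m + 1) / s)\<^sup>2"
    using s(1) by (simp add: power_divide field_simps)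
  have "((s + m + 1) / s - 1)\<^sup>2 = (m + 1)\<^sup>2 / s\<^sup>2"
    using s(1) by (simp add: field_simps)
  also have "\<dots> \<le> (m + 1)\<^sup>2 / (m + 1)"
    using s \<open>0 \<le> m\<close> by (intro divide_left_mono) (auto intro: mult_pos_pos)
  also have "\<dots> = m + 1" using \<open>0 \<le> m\<close> by (simp add: power2_eq_square)
  finally have upper: "((s + m + 1) / s - 1)\<^sup>2 \<le> m + 1" .
  have "1 \<le> (s + m + 1) / s" using s(1) \<open>0 \<le> m\<close> by simp
  with lower upper show ?case unfolding r m_def by simp
qed

lemma tel_ratio_at_top: "filterlim tel_ratio at_top sequentially"
proof (rule filterlim_at_top_mono)
  show "filterlim (\<lambda>n. sqrt (real n + 1)) at_top sequentially" by real_asymp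
  show "\<forall>\<^sub>F n in sequentially. sqrt (real n + 1) \<le> tel_ratio n"
    using tel_ratio_bounds tel_ratio_pos
    by (intro always_eventually allI real_le_lsqrt) (auto intro: less_imp_le)
qed

lemma telephone_Suc_Suc_limit:
  "(\<lambda>n. real (telephone (n + 2)) / (real (telephone n) * real n)) \<longlonglongrightarrow> 1"
proof -
  have "(\<lambda>n. tel_ratio n / real n) \<longlonglongrightarrow> 0"
  proof (rule tendsto_sandwich[of "\<lambda>n. 0" _ _ "\<lambda>n. (1 + sqrt (real n)) / real n"])
    have "tel_ratio n \<le> 1 + sqrt (real n)" for n
      using tel_ratio_bounds[of n] real_le_rsqrt[of "tel_ratio n - 1" "real n"] by simp
    then show "\<forall>\<^sub>F n in sequentially. tel_ratio n / real n \<le> (1 + sqrt (real n)) / real n"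
      by (intro always_eventually allI divide_right_mono) auto
    show "\<forall>\<^sub>F n in sequentially. 0 \<le> tel_ratio n / real n"
      using tel_ratio_pos by (intro always_eventually allI) (simp add: less_imp_le)
  qed (simp, real_asymp)
  moreover have "(\<lambda>n. (real n + 1) / real n) \<longlonglongrightarrow> 1" by real_asymp
  ultimately have "(\<lambda>n. tel_ratio n / real n + (real n + 1) / real n) \<longlonglongrightarrow> 1"
    using tendsto_add by fastforce
  moreover have "\<forall>\<^sub>F n in sequentially. tel_ratio n / real n + (real n + 1) / real n =
      real (telephone (n + 2)) / (real (telephone n) * real n)"
    using eventually_gt_at_top[of 0]
  proof eventually_elim
    case (elim n)
    then show ?case
      using telephone_pos[of n] by (simp add: tel_ratio_def numeral_2_eq_2 field_simps)
  qed
  ultimately show ?thesis by (rule Lim_transform_eventually)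
qed

lemma step_two_power_limit:
  fixes f :: "nat \<Rightarrow> real"
  assumes pos: "\<And>n. 0 < f n" and lim: "(\<lambda>n. f (n + 2) / (f n * real n)) \<longlonglongrightarrow> 1"
  shows "(\<lambda>n. f (n + 2 * j) / (f n * real n ^ j)) \<longlonglongrightarrow> 1"
proof (induction j)
  case 0
  show ?case using pos by (simp add: less_imp_neq[symmetric])
next
  case (Suc j)
  have "(\<lambda>n. f (n + 2 + 2 * j) / (f (n + 2) * real (n + 2) ^ j) * (f (n + 2) / (f n * real n))
      * ((real n + 2) / real n) ^ j) \<longlonglongrightarrow> 1 * 1 * 1 ^ j"
    using LIMSEQ_ignore_initial_segment[OF Suc.IH, of 2]
    by (intro tendsto_mult lim tendsto_power) (simp_all, real_asymp)
  moreover have "\<forall>\<^sub>F n in sequentially. f (n + 2 + 2 * j) / (f (n + 2) * real (n + 2) ^ j)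
      * (f (n + 2) / (f n * real n)) * ((real n + 2) / real n) ^ j =
      f (n + 2 * Suc j) / (f n * real n ^ Suc j)"
    using eventually_gt_at_top[of 0]
  proof eventually_elim
    case (elim n)
    then show ?case
      using pos[of n] pos[of "n + 2"] by (simp add: field_simps power_divide add.assoc)
  qed
  ultimately show ?case by (simp add: Lim_transform_eventually)
qed

lemma binomial_power_limit: "(\<lambda>n. real ((n + j) choose j) / real n ^ j) \<longlonglongrightarrow> 1 / fact j"
proof -
  have "(\<lambda>n. (\<Prod>i<j. (real n + (1 + real i)) / real n) / fact j) \<longlonglongrightarrow> (\<Prod>i<j. 1) / fact j"
    by (intro tendsto_divide tendsto_prod tendsto_const) (real_asymp, simp)
  moreover have
    "real ((n + j) choose j) / real n ^ j = (\<Prod>i<j. (real n + (1 + real i)) / real n) / fact j" for n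
    by (simp add: binomial_gbinomial gbinomial_pochhammer' pochhammer_prod prod_dividef
        atLeast0LessThan add_ac)
  ultimately show ?thesis by simp
qed

lemma tel_binom_limit: "(\<lambda>L. real (tel_binom L j) / real (telephone (L + j))) \<longlonglongrightarrow> 1 / fact j"
proof (rule LIMSEQ_offset[of _ j])
  let ?t = "\<lambda>n. real (telephone n)"
  have "(\<lambda>n. (real ((n + j) choose j) / real n ^ j) / (?t (n + 2 * j) / (?t n * real n ^ j)))
      \<longlonglongrightarrow> (1 / fact j) / 1"
    using step_two_power_limit[of ?t, OF _ telephone_Suc_Suc_limit] telephone_pos
    by (intro tendsto_divide binomial_power_limit) auto
  moreover have "\<forall>\<^sub>F n in sequentially.
      (real ((n + j) choose j) / real n ^ j) / (?t (n + 2 * j) / (?t n * real n ^ j)) =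
      real (tel_binom (n + j) j) / ?t (n + 2 * j)"
    using eventually_gt_at_top[of 0]
  proof eventually_elim
    case (elim n)
    then show ?case
      using telephone_pos[of n] telephone_pos[of "n + 2 * j"]
      by (simp add: tel_binom_def field_simps)
  qed
  ultimately have "(\<lambda>n. real (tel_binom (n + j) j) / ?t (n + 2 * j)) \<longlonglongrightarrow> 1 / fact j"
    by (simp add: Lim_transform_eventually)
  then show "(\<lambda>n. real (tel_binom (n + j) j) / ?t (n + j + j)) \<longlonglongrightarrow> 1 / fact j"
    by (simp add: mult_2 add.assoc)
qed

lemma tel_binom_limit_0:
  assumes "j < k"
  shows "(\<lambda>L. real (tel_binom L j) / real (telephone (L + k))) \<longlonglongrightarrow> 0"
proof (rule tendsto_sandwich[of "\<lambda>L. 0" _ _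
      "\<lambda>L. real (tel_binom L j) / real (telephone (L + j)) * inverse (tel_ratio (L + j))"])
  have "filterlim (\<lambda>L. tel_ratio (L + j)) at_top sequentially"
    using filterlim_compose[OF tel_ratio_at_top filterlim_add_const_nat_at_top] .
  then have "(\<lambda>L. real (tel_binom L j) / real (telephone (L + j)) * inverse (tel_ratio (L + j)))
      \<longlonglongrightarrow> 1 / fact j * 0"
    by (intro tendsto_mult tel_binom_limit tendsto_inverse_0_at_top)
  then show "(\<lambda>L. real (tel_binom L j) / real (telephone (L + j)) * inverse (tel_ratio (L + j)))
      \<longlonglongrightarrow> 0" by simp
  have "real (tel_binom L j) / real (telephone (L + k)) \<le>
      real (tel_binom L j) / real (telephone (L + j)) * inverse (tel_ratio (L + j))" for L
  proof -
    have "real (telephone (Suc (L + j))) \<le> real (telephone (L + k))"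
      using assms monoD[OF telephone_mono, of "Suc (L + j)" "L + k"] by simp
    then show ?thesis
      using telephone_pos[of "L + j"] telephone_pos[of "Suc (L + j)"]
      by (simp add: tel_ratio_def divide_left_mono)
  qed
  then show "\<forall>\<^sub>F L in sequentially. real (tel_binom L j) / real (telephone (L + k)) \<le>
      real (tel_binom L j) / real (telephone (L + j)) * inverse (tel_ratio (L + j))"
    by simp
qed simp_all

lemma tel_binom_ratio_limit:
  assumes "j \<le> k"
  shows "(\<lambda>L. real (tel_binom L j) / real (telephone (L + k))) \<longlonglongrightarrow> (if j = k then 1 / fact k else 0)"
  using tel_binom_limit[of k] tel_binom_limit_0[of j k] assms by auto

theorem theorem1:
  fixes T :: tableau and k :: nat
  assumes "is_syt k T"
  shows "(\<lambda>n. real (N_count n T) / real (card (syt_set n)))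
           \<longlonglongrightarrow> real (card (syt_shape (dom T))) / fact k"
proof -
  let ?D = "dom T"
  let ?term = "\<lambda>j L. real (tel_binom L j) / real (telephone (L + k)) * real (down_paths j ?D)"
  have D: "ferrers ?D" "card ?D = k" using assms unfolding is_syt_def by auto
  have "real (N_count (L + k) T) / real (card (syt_set (L + k))) = (\<Sum>j\<le>k. ?term j L)" for L
    using N_count_expansion[OF assms, of L]
    by (simp add: card_syt_set sum_divide_distrib add.commute)
  moreover have "(\<lambda>L. \<Sum>j\<le>k. ?term j L)
      \<longlonglongrightarrow> (\<Sum>j\<le>k. (if j = k then 1 / fact k else 0) * real (down_paths j ?D))"
    by (intro tendsto_sum tendsto_mult_right tel_binom_ratio_limit) simp
  moreover have "(\<Sum>j\<le>k. (if j = k then 1 / fact k else 0) * real (down_paths j ?D)) =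
      real (card (syt_shape ?D)) / fact k"
    using card_syt_shape[OF D(1)] D(2) by (simp add: if_distrib[of "\<lambda>x. x * _"] cong: if_cong)
  ultimately have "(\<lambda>L. real (N_count (L + k) T) / real (card (syt_set (L + k))))
      \<longlonglongrightarrow> real (card (syt_shape ?D)) / fact k"
    by (simp only:)
  then show ?thesis by (rule LIMSEQ_offset)
qed

end
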